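(* Let $s,t,z$ be positive integers, $p=\min\{\lfloor\frac{z-1}{ts-t}\rfloor,t-1\}$ (with $p=t-1$ when $s=1$), and let $N_{\text{PolyDot-CMPC}}$ and $N_{\text{GCSA-NA}}$ be as in the context. Then $N_{\text{PolyDot-CMPC}}<N_{\text{GCSA-NA}}$ in the regions 1. $z>ts$, $p<\frac{t-1}{s}$, $t\ne1$; 2. $s<t$, $ts-t<z\le\min\{ts,\,t(t-1)-1\}$; 3. $z\le ts-t$; 4. $s=1$, $t>z$, $t\ne2$; and for all other values of $s,t,z$, $N_{\text{PolyDot-CMPC}}\ge N_{\text{GCSA-NA}}$.
   Context: $N_{\text{PolyDot-CMPC}}$ is the number of workers needed by the PolyDot-CMPC scheme, given by: with $\theta'=2ts-t$ and $\upsilon'=\max\{ts-2t-s+2,\frac{ts-2t+1}{2}\}$, $N_{\text{PolyDot-CMPC}}=(p+2)ts+\theta'(t-1)+2z-1$ if $ts<z$ or $t=1$; $=2ts+\theta'(t-1)+3z-1$ if $ts-t<z\le ts$, $s,t\ne1$; $=2ts+\theta'(t-1)+2z-1$ if $ts-2t<z\le ts-t$, $s,t\ne1$; $=(t+1)ts+(t-1)(z+t-1)+2z-1$ if $\upsilon'<z\le ts-2t$, $s,t\ne1$; $=\theta't+z$ if $z\le\upsilon'$, $s,t\ne1$; $=t^2+2t+tz-1$ if $s=1$, $t\ge z$, $t\ne1$. $N_{\text{GCSA-NA}}=2st^2+2z-1$ is the number of workers of the GCSA-NA baseline with a single batch. Here $s,t$ are the numbers of row/column partitions and $z$ the number of colluding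 workers. *)

theory Defs
  imports Complex_Main
begin

definition p_param :: "nat \<Rightarrow> nat \<Rightarrow> nat \<Rightarrow> int" where
  "p_param s t z =
     (if s = 1 then int t - 1
      else min (\<lfloor>(real z - 1) / (real t * real s - real t)\<rfloor>) (int t - 1))"

definition theta' :: "nat \<Rightarrow> nat \<Rightarrow> int" where
  "theta' s t = 2 * int t * int s - int t"

definition upsilon' :: "nat \<Rightarrow> nat \<Rightarrow> real" where
  "upsilon' s t = max (real t * real s - 2 * real t - real s + 2)
                      ((real t * real s - 2 * real t + 1) / 2)"

definition N_PolyDot :: "nat \<Rightarrow> nat \<Rightarrow> nat \<Rightarrow> int" where
  "N_PolyDot s t z =
    (let ts = int t * int s; T = int t; S = int s; Z = int z; th = theta' s t in
     if ts < Z \<or> t = 1 then (p_param s t z + 2) * ts + th * (T - 1) + 2 * Z - 1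
     else if s = 1 then T^2 + 2 * T + T * Z - 1
     else if ts - T < Z \<and> Z \<le> ts then 2 * ts + th * (T - 1) + 3 * Z - 1
     else if ts - 2 * T < Z \<and> Z \<le> ts - T then 2 * ts + th * (T - 1) + 2 * Z - 1
     else if upsilon' s t < real z \<and> Z \<le> ts - 2 * T
       then (T + 1) * ts + (T - 1) * (Z + T - 1) + 2 * Z - 1
     else th * T + Z)"

text \<open>Number of workers of GCSA-NA with a single batch.\<close>
definition N_GCSA_NA :: "nat \<Rightarrow> nat \<Rightarrow> nat \<Rightarrow> int" where
  "N_GCSA_NA s t z = 2 * int s * int t ^ 2 + 2 * int z - 1"

end

theory Submission
  imports Defs
begin

text \<open>In every regime of the piecewise definition, N_PolyDot - N_GCSA_NA
  is a short polynomial in s, t, z (and p) whose sign can be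
  read off directly: t (p s - (t - 1)) for z > ts, (t - 2)(z - t) for s = 1,
  z - t(t - 1) for ts - t < z \<le> ts, -t(t - 1) for ts - 2t < z \<le> ts - t,
  and a negative quantity in the two remaining regimes.\<close>

lemma p_param_nonneg:
  assumes "s \<ge> 1" and "t \<ge> 1" and "z \<ge> 1"
  shows "p_param s t z \<ge> 0"
proof -
  have "real t * real s - real t \<ge> 0"
    using assms by (simp add: mult_le_cancel_left1)
  then show ?thesis
    unfolding p_param_def using assms by (auto simp: divide_nonneg_nonneg)
qed

lemma N_PolyDot_less_N_GCSA_NA_iff_large_z:
  assumes "s \<ge> 1" and "t \<ge> 1" and "int t * int s < int z \<or> t = 1"
  shows "N_PolyDot s t z < N_GCSA_NA s t z
         \<longleftrightarrow> real_of_int (p_param s t z) < (real t - 1) / real s"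
proof -
  let ?p = "p_param s t z"
  have "N_PolyDot s t z - N_GCSA_NA s t z = int t * (?p * int s - (int t - 1))"
    using assms(3) unfolding N_PolyDot_def N_GCSA_NA_def theta'_def Let_def
    by (simp add: algebra_simps power2_eq_square)
  moreover have "real_of_int ?p < (real t - 1) / real s \<longleftrightarrow> ?p * int s < int t - 1"
  proof -
    have "real_of_int ?p < (real t - 1) / real s \<longleftrightarrow> real_of_int (?p * int s) < real_of_int (int t - 1)"
      using assms(1) by (simp add: pos_less_divide_eq)
    then show ?thesis
      by (simp only: of_int_less_iff)
  qed
  moreover have "int t * (?p * int s - (int t - 1)) < 0 \<longleftrightarrow> ?p * int s < int t - 1"
    using assms(2) by (simp add: mult_less_0_iff)
  ultimately show ?thesis
    by linarith
qed

lemma N_PolyDot_less_N_GCSA_NA_iff_s1: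
  assumes "t \<ge> 2" and "z \<le> t"
  shows "N_PolyDot 1 t z < N_GCSA_NA 1 t z \<longleftrightarrow> z < t \<and> t \<noteq> 2"
proof -
  have "N_PolyDot 1 t z - N_GCSA_NA 1 t z = (int t - 2) * (int z - int t)"
    using assms unfolding N_PolyDot_def N_GCSA_NA_def Let_def
    by (simp add: algebra_simps power2_eq_square)
  moreover have "(int t - 2) * (int z - int t) < 0 \<longleftrightarrow> z < t \<and> t \<noteq> 2"
    using assms by (auto simp: mult_less_0_iff)
  ultimately show ?thesis
    by linarith
qed

lemma N_PolyDot_less_N_GCSA_NA_iff_upper:
  assumes "s \<ge> 2" and "t \<ge> 2"
    and "int t * int s - int t < int z" and "int z \<le> int t * int s"
  shows "N_PolyDot s t z < N_GCSA_NA s t z \<longleftrightarrow> s < t \<and> int z < int t * (int t - 1)"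
proof -
  have "N_PolyDot s t z - N_GCSA_NA s t z = int z - int t * (int t - 1)"
    using assms unfolding N_PolyDot_def N_GCSA_NA_def theta'_def Let_def
    by (simp add: algebra_simps power2_eq_square)
  moreover have "s < t" if "int z < int t * (int t - 1)"
  proof (rule ccontr)
    assume "\<not> s < t"
    then have "int t * int t \<le> int t * int s"
      by (intro mult_left_mono) auto
    then show False
      using that assms(3) by (simp add: algebra_simps)
  qed
  ultimately show ?thesis
    by auto
qed

lemma N_PolyDot_less_N_GCSA_NA_middle:
  assumes "s \<ge> 2" and "t \<ge> 2"
    and "int t * int s - 2 * int t < int z" and "int z \<le> int t * int s - int t"
  shows "N_PolyDot s t z < N_GCSA_NA s t z"
proof -
  have "N_PolyDot s t z - N_GCSA_NA s t z = - (int t * (int t - 1))"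
    using assms unfolding N_PolyDot_def N_GCSA_NA_def theta'_def Let_def
    by (simp add: algebra_simps power2_eq_square)
  moreover have "int t * (int t - 1) > 0"
    using assms(2) by simp
  ultimately show ?thesis
    by linarith
qed

lemma N_PolyDot_less_N_GCSA_NA_small:
  assumes "s \<ge> 2" and "t \<ge> 2" and "z \<ge> 1" and "int z \<le> int t * int s - 2 * int t"
  shows "N_PolyDot s t z < N_GCSA_NA s t z"
proof (cases "upsilon' s t < real z")
  case True
  have "N_PolyDot s t z - N_GCSA_NA s t z
        = int t * int s + (int t - 1) * (int z + int t - 1) - int t * int t * int s"
    using assms True unfolding N_PolyDot_def N_GCSA_NA_def Let_def
    by (simp add: algebra_simps power2_eq_square)
  moreover have "(int t - 1) * (int z + int t - 1) \<le> (int t - 1) * (int t * int s - int t - 1)"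
    using assms by (intro mult_left_mono) auto
  moreover have "(int t - 1) * (int t * int s - int t - 1)
                 = int t * int t * int s - int t * int t - int t * int s + 1"
    by (simp add: algebra_simps)
  moreover have "int t * int t \<ge> 2 * 2"
    using assms(2) by (intro mult_mono) auto
  ultimately show ?thesis
    by linarith
next
  case False
  have "N_PolyDot s t z - N_GCSA_NA s t z = - (int t * int t) - int z + 1"
    using assms False unfolding N_PolyDot_def N_GCSA_NA_def theta'_def Let_def
    by (simp add: algebra_simps power2_eq_square)
  moreover have "int t * int t > 0"
    using assms(2) by simp
  ultimately show ?thesis
    using assms(3) by linarith
qed

theorem lemma3:
  fixes s t z :: nat
  assumes "s \<ge> 1" and "t \<ge> 1" and "z \<ge> 1"
  shows "N_PolyDot s t z < N_GCSA_NA s t z \<longleftrightarrow>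
           ((z > t * s \<and> real_of_int (p_param s t z) < (real t - 1) / real s \<and> t \<noteq> 1)
          \<or> (s \<noteq> 1 \<and> t \<noteq> 1 \<and> s < t \<and> int t * int s - int t < int z \<and> int z \<le> min (int t * int s) (int t * (int t - 1) - 1))
          \<or> (s \<noteq> 1 \<and> t \<noteq> 1 \<and> int z \<le> int t * int s - int t)
          \<or> (s = 1 \<and> t > z \<and> t \<noteq> 2))"
proof (cases "int t * int s < int z \<or> t = 1")
  case True
  \<comment> \<open>for t = 1 both sides are false because p \<ge> 0\<close>
  then show ?thesis
    using N_PolyDot_less_N_GCSA_NA_iff_large_z[OF assms(1,2) True] p_param_nonneg[OF assms] assms
    by (auto simp flip: of_nat_mult)
next
  case False
  then have "t \<ge> 2" and "z \<le> t * s"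
    using assms(2) by (auto simp flip: of_nat_mult)
  then consider "s = 1" | "s \<ge> 2" "int t * int s - int t < int z"
    | "s \<ge> 2" "int t * int s - 2 * int t < int z" "int z \<le> int t * int s - int t"
    | "s \<ge> 2" "int z \<le> int t * int s - 2 * int t"
    using assms(1) by linarith
  then show ?thesis
  proof cases
    case 1
    then show ?thesis
      using N_PolyDot_less_N_GCSA_NA_iff_s1 \<open>t \<ge> 2\<close> \<open>z \<le> t * s\<close> by auto
  next
    case 2
    then show ?thesis
      using N_PolyDot_less_N_GCSA_NA_iff_upper[OF 2(1) \<open>t \<ge> 2\<close>] \<open>z \<le> t * s\<close>
      by (auto simp flip: of_nat_mult)
  next
    case 3
    then show ?thesis
      using N_PolyDot_less_N_GCSA_NA_middle \<open>t \<ge> 2\<close> by auto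
  next
    case 4
    then show ?thesis
      using N_PolyDot_less_N_GCSA_NA_small assms(3) \<open>t \<ge> 2\<close> by auto
  qed
qed

end
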